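(* Let $\mathcal{H}$ be a complex Hilbert space and let $T\in\mathcal{B}(\mathcal{H})$ be a concave operator such that $\Delta_T$ has rank one. Then $T$ is a $\Delta_T$-regular completely hyperexpansive operator and its Cauchy dual $T'=T(T^*T)^{-1}$ is a subnormal contraction.
   Context: $\Delta_T=T^*T-I$. $T$ is concave if $T^{*2}T^2-2T^*T+I\le0$ (then $T$ is left invertible). $T$ is $\Delta_T$-regular if $\Delta_TT=\Delta_T^{1/2}T\Delta_T^{1/2}$; completely hyperexpansive if $\sum_{j=0}^n(-1)^j\binom{n}{j}T^{*j}T^j\le0$ for all $n\ge1$. Subnormal means being the restriction of a normal operator to an invariant subspace. *)

theory Defs
  imports "HOL-Analysis.Analysis"
begin

class complex_inner = real_normed_vector +
  fixes cscale :: "complex \<Rightarrow> 'a \<Rightarrow> 'a"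
    and cinner :: "'a \<Rightarrow> 'a \<Rightarrow> complex"
  assumes cscale_of_real: "cscale (complex_of_real r) x = r *\<^sub>R x"
    and cscale_add_right: "cscale a (x + y) = cscale a x + cscale a y"
    and cscale_add_left: "cscale (a + b) x = cscale a x + cscale b x"
    and cscale_cscale: "cscale a (cscale b x) = cscale (a * b) x"
    and cinner_commute: "cinner x y = cnj (cinner y x)"
    and cinner_add_right: "cinner x (y + z) = cinner x y + cinner x z"
    and cinner_cscale_right: "cinner x (cscale a y) = a * cinner x y"
    and cinner_ge_zero: "0 \<le> Re (cinner x x)"
    and cinner_eq_zero_iff: "cinner x x = 0 \<longleftrightarrow> x = 0"
    and norm_eq_sqrt_cinner: "norm x = sqrt (Re (cinner x x))"

class chilbert = complex_inner + complete_space

definition bounded_clinear :: "('a::complex_inner \<Rightarrow> 'b::complex_inner) \<Rightarrow> bool" where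
  "bounded_clinear T \<longleftrightarrow>
     (\<forall>x y. T (x + y) = T x + T y) \<and> (\<forall>c x. T (cscale c x) = cscale c (T x)) \<and>
     (\<exists>K. \<forall>x. norm (T x) \<le> norm x * K)"

definition cadj :: "('a::complex_inner \<Rightarrow> 'a) \<Rightarrow> 'a \<Rightarrow> 'a" where
  "cadj T = (THE S. \<forall>x y. cinner (T x) y = cinner x (S y))"

definition opos :: "('a::complex_inner \<Rightarrow> 'a) \<Rightarrow> bool" where
  "opos A \<longleftrightarrow> (\<forall>x. Im (cinner x (A x)) = 0 \<and> 0 \<le> Re (cinner x (A x)))"

definition oneg :: "('a::complex_inner \<Rightarrow> 'a) \<Rightarrow> bool" where
  "oneg A \<longleftrightarrow> opos (\<lambda>x. - A x)"

definition osqrt :: "('a::complex_inner \<Rightarrow> 'a) \<Rightarrow> 'a \<Rightarrow> 'a" where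
  "osqrt A = (THE S. bounded_clinear S \<and> opos S \<and> (\<forall>x. S (S x) = A x))"

definition Delta :: "('a::complex_inner \<Rightarrow> 'a) \<Rightarrow> 'a \<Rightarrow> 'a" where
  "Delta T = (\<lambda>x. cadj T (T x) - x)"

definition rank_one :: "('a::complex_inner \<Rightarrow> 'a) \<Rightarrow> bool" where
  "rank_one A \<longleftrightarrow> (\<exists>e. e \<noteq> 0 \<and> range A = {cscale c e | c. True})"

definition concave_op :: "('a::complex_inner \<Rightarrow> 'a) \<Rightarrow> bool" where
  "concave_op T \<longleftrightarrow>
     oneg (\<lambda>x. cadj T (cadj T (T (T x))) - 2 *\<^sub>R cadj T (T x) + x)"

definition Delta_regular :: "('a::complex_inner \<Rightarrow> 'a) \<Rightarrow> bool" where
  "Delta_regular T \<longleftrightarrow>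
     (\<forall>x. Delta T (T x) = osqrt (Delta T) (T (osqrt (Delta T) x)))"

definition completely_hyperexpansive :: "('a::complex_inner \<Rightarrow> 'a) \<Rightarrow> bool" where
  "completely_hyperexpansive T \<longleftrightarrow>
     (\<forall>n::nat. n \<ge> 1 \<longrightarrow>
        oneg (\<lambda>x. \<Sum>j = 0..n. ((-1) ^ j * real (n choose j)) *\<^sub>R
                                 ((cadj T ^^ j) ((T ^^ j) x))))"

definition cauchy_dual :: "('a::complex_inner \<Rightarrow> 'a) \<Rightarrow> 'a \<Rightarrow> 'a" where
  "cauchy_dual T = T \<circ> inv (\<lambda>x. cadj T (T x))"

definition contraction :: "('a::complex_inner \<Rightarrow> 'a) \<Rightarrow> bool" where
  "contraction T \<longleftrightarrow> (\<forall>x. norm (T x) \<le> norm x)"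

text \<open>The Hilbert space \<open>\<ell>^2(\<nat>, H)\<close> (countable orthogonal sum of copies of \<open>H\<close>),
  represented as a set of sequences, with pointwise operations.\<close>

definition l2 :: "(nat \<Rightarrow> 'a::complex_inner) set" where
  "l2 = {f. summable (\<lambda>n. (norm (f n))\<^sup>2)}"

definition l2inner :: "(nat \<Rightarrow> 'a::complex_inner) \<Rightarrow> (nat \<Rightarrow> 'a) \<Rightarrow> complex" where
  "l2inner f g = (\<Sum>n. cinner (f n) (g n))"

definition l2norm :: "(nat \<Rightarrow> 'a::complex_inner) \<Rightarrow> real" where
  "l2norm f = sqrt (\<Sum>n. (norm (f n))\<^sup>2)"

definition normal_l2 :: "((nat \<Rightarrow> 'a::complex_inner) \<Rightarrow> (nat \<Rightarrow> 'a)) \<Rightarrow> bool" where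
  "normal_l2 N \<longleftrightarrow>
     (\<forall>f\<in>l2. N f \<in> l2) \<and>
     (\<forall>f\<in>l2. \<forall>g\<in>l2. N (\<lambda>n. f n + g n) = (\<lambda>n. N f n + N g n)) \<and>
     (\<forall>f\<in>l2. \<forall>c. N (\<lambda>n. cscale c (f n)) = (\<lambda>n. cscale c (N f n))) \<and>
     (\<exists>K. \<forall>f\<in>l2. l2norm (N f) \<le> K * l2norm f) \<and>
     (\<exists>M. (\<forall>g\<in>l2. M g \<in> l2) \<and>
          (\<forall>f\<in>l2. \<forall>g\<in>l2. l2inner (N f) g = l2inner f (M g)) \<and>
          (\<forall>f\<in>l2. M (N f) = N (M f)))"

text \<open>\<open>T\<close> is subnormal: it is (unitarily equivalent to) the restriction of a normal
  operator \<open>N\<close> to an invariant subspace, namely the image of an isometric embedding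
  \<open>J : H \<rightarrow> \<ell>^2(\<nat>, H)\<close> with \<open>N J = J T\<close>. Since any minimal normal extension of an
  operator on \<open>H\<close> lives on a space of Hilbert dimension at most that of
  \<open>\<ell>^2(\<nat>, H)\<close>, this is equivalent to the existence of a normal extension on
  some Hilbert space.\<close>
definition subnormal :: "('a::complex_inner \<Rightarrow> 'a) \<Rightarrow> bool" where
  "subnormal T \<longleftrightarrow>
     (\<exists>N (J :: 'a \<Rightarrow> nat \<Rightarrow> 'a). normal_l2 N \<and>
        (\<forall>x. J x \<in> l2) \<and>
        (\<forall>x y. J (x + y) = (\<lambda>n. J x n + J y n)) \<and>
        (\<forall>c x. J (cscale c x) = (\<lambda>n. cscale c (J x n))) \<and>
        (\<forall>x y. l2inner (J x) (J y) = cinner x y) \<and>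
        (\<forall>x. N (J x) = J (T x)))"

end

theory Submission
  imports Defs
begin

text \<open>Write \<open>\<Delta>\<^sub>T = e \<otimes> e\<close>. Concavity says \<open>\<parallel>T\<^sup>2x\<parallel>\<^sup>2 - \<parallel>T x\<parallel>\<^sup>2 \<le> \<parallel>T x\<parallel>\<^sup>2 - \<parallel>x\<parallel>\<^sup>2\<close>, which
  reads \<open>\<bar>\<langle>e, T x\<rangle>\<bar> \<le> \<bar>\<langle>e, x\<rangle>\<bar>\<close>, so \<open>e\<close> is an eigenvector of \<open>T\<^sup>*\<close>: \<open>T\<^sup>* e = \<alpha> e\<close> with
  \<open>\<bar>\<alpha>\<bar> \<le> 1\<close>. The square root of \<open>\<Delta>\<^sub>T\<close> is
  \<open>\<parallel>e\<parallel>\<^sup>-\<^sup>1 e \<otimes> e\<close>, which gives regularity; \<open>\<parallel>T\<^sup>j x\<parallel>\<^sup>2 = \<parallel>x\<parallel>\<^sup>2 + \<bar>\<langle>e, x\<rangle>\<bar>\<^sup>2 \<Sum>\<^sub>k\<^sub><\<^sub>j \<bar>\<alpha>\<bar>\<^sup>2\<^sup>k\<close>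
  makes the alternating binomial sums non-positive; and the Cauchy dual
  \<open>S = T (I + e \<otimes> e)\<^sup>-\<^sup>1\<close> has \<open>S\<^sup>*S = (I + e \<otimes> e)\<^sup>-\<^sup>1 \<le> I\<close> and \<open>S\<^sup>* e = \<beta> e\<close>.
  For subnormality, \<open>S\<^sup>* A S = A\<close> for a positive invertible \<open>A = I - c e \<otimes> e\<close>, so
  \<open>W S W\<^sup>-\<^sup>1\<close> with \<open>W\<^sup>2 = A\<close> is an isometry. Its unitary extension on \<open>H \<oplus> H\<close>, together
  with multiplication by \<open>cnj \<beta>\<close> on a third copy of \<open>H\<close> that carries the rest \<open>I - A\<close>
  of the norm, is a normal extension of \<open>S\<close>.\<close>

lemma cscale_zero_left [simp]: "cscale 0 (x::'a::complex_inner) = 0"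
  using cscale_of_real[of 0 x] by simp

lemma cscale_one [simp]: "cscale 1 (x::'a::complex_inner) = x"
  using cscale_of_real[of 1 x] by simp

lemma cscale_zero_right [simp]: "cscale a (0::'a::complex_inner) = 0"
  using cscale_add_right[of a 0 0] by simp

lemma cscale_minus_right: "cscale a (- (x::'a::complex_inner)) = - cscale a x"
  using cscale_add_right[of a x "-x"] by (simp add: eq_neg_iff_add_eq_0 add.commute)

lemma cscale_diff_right: "cscale a ((x::'a::complex_inner) - y) = cscale a x - cscale a y"
  using cscale_add_right[of a x "-y"] by (simp add: cscale_minus_right)

lemma scaleR_cscale: "r *\<^sub>R (x::'a::complex_inner) = cscale (complex_of_real r) x"
  by (simp add: cscale_of_real)

lemma cinner_add_left: "cinner ((x::'a::complex_inner) + y) z = cinner x z + cinner y z"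
  by (metis cinner_add_right cinner_commute complex_cnj_add)

lemma cinner_cscale_left: "cinner (cscale a (x::'a::complex_inner)) y = cnj a * cinner x y"
  by (metis cinner_cscale_right cinner_commute complex_cnj_mult)

lemma cinner_zero_right [simp]: "cinner (x::'a::complex_inner) 0 = 0"
  using cinner_add_right[of x 0 0] by simp

lemma cinner_zero_left [simp]: "cinner 0 (x::'a::complex_inner) = 0"
  using cinner_add_left[of 0 0 x] by simp

lemma cinner_minus_right: "cinner (x::'a::complex_inner) (- y) = - cinner x y"
  using cinner_add_right[of x y "-y"] by (simp add: eq_neg_iff_add_eq_0 add.commute)

lemma cinner_minus_left: "cinner (- (x::'a::complex_inner)) y = - cinner x y"
  using cinner_add_left[of x "-x" y] by (simp add: eq_neg_iff_add_eq_0 add.commute)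

lemma cinner_diff_right: "cinner (x::'a::complex_inner) (y - z) = cinner x y - cinner x z"
  using cinner_add_right[of x y "-z"] by (simp add: cinner_minus_right)

lemma cinner_diff_left: "cinner ((x::'a::complex_inner) - y) z = cinner x z - cinner y z"
  using cinner_add_left[of x "-y" z] by (simp add: cinner_minus_left)

lemma cinner_scaleR_right: "cinner (x::'a::complex_inner) (r *\<^sub>R y) = complex_of_real r * cinner x y"
  by (simp add: scaleR_cscale cinner_cscale_right)

lemma cinner_sum_right: "cinner (x::'a::complex_inner) (sum f A) = (\<Sum>i\<in>A. cinner x (f i))"
  by (induction A rule: infinite_finite_induct) (simp_all add: cinner_add_right)

lemma cinner_self: "cinner (x::'a::complex_inner) x = complex_of_real ((norm x)\<^sup>2)"
proof -
  have "Im (cinner x x) = Im (cnj (cinner x x))"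
    using cinner_commute[of x x] by simp
  then have "Im (cinner x x) = 0" by simp
  moreover have "(norm x)\<^sup>2 = Re (cinner x x)"
    using norm_eq_sqrt_cinner[of x] cinner_ge_zero[of x] by simp
  ultimately show ?thesis by (simp add: complex_eq_iff)
qed

lemma power2_norm_eq_Re_cinner: "(norm (x::'a::complex_inner))\<^sup>2 = Re (cinner x x)"
  by (simp add: cinner_self)

lemma cinner_right_ext: "(\<And>z. cinner z (a::'a::complex_inner) = cinner z b) \<Longrightarrow> a = b"
  using cinner_eq_zero_iff[of "a - b"] by (simp add: cinner_diff_right)

lemma power2_norm_add_cscale:
  "(norm ((x::'a::complex_inner) + cscale t y))\<^sup>2
     = (norm x)\<^sup>2 + 2 * Re (t * cinner x y) + (cmod t)\<^sup>2 * (norm y)\<^sup>2"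
proof -
  have "cinner (x + cscale t y) (x + cscale t y)
      = cinner x x + t * cinner x y + cnj t * cinner y x + cnj t * t * cinner y y"
    by (simp add: cinner_add_left cinner_add_right cinner_cscale_left cinner_cscale_right
        algebra_simps)
  moreover have "Re (cnj t * cinner y x) = Re (t * cinner x y)"
    unfolding cinner_commute[of y x] by simp
  moreover have "cnj t * t = complex_of_real ((cmod t)\<^sup>2)"
    by (metis complex_norm_square mult.commute)
  ultimately have "Re (cinner (x + cscale t y) (x + cscale t y))
     = (norm x)\<^sup>2 + 2 * Re (t * cinner x y) + (cmod t)\<^sup>2 * (norm y)\<^sup>2"
    by (simp add: cinner_self)
  then show ?thesis by (simp only: power2_norm_eq_Re_cinner)
qed

lemma norm_cscale: "norm (cscale c (x::'a::complex_inner)) = cmod c * norm x"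
proof -
  have "(norm (cscale c x))\<^sup>2 = (cmod c * norm x)\<^sup>2"
    using power2_norm_add_cscale[of 0 c x] by (simp add: power_mult_distrib)
  then show ?thesis by (simp add: power2_eq_iff_nonneg)
qed

lemma cmod_cinner_le: "cmod (cinner (x::'a::complex_inner) y) \<le> norm x * norm y"
proof (cases "y = 0")
  case True then show ?thesis by simp
next
  case False
  define a where "a = cinner x y"
  define n where "n = (norm y)\<^sup>2"
  have n: "n > 0" using False by (simp add: n_def)
  \<comment> \<open>expand \<open>0 \<le> \<parallel>x + t y\<parallel>\<^sup>2\<close> at the minimising \<open>t = - cnj a / n\<close>\<close>
  define t where "t = - cnj a / complex_of_real n"
  have "t * a = complex_of_real (- ((cmod a)\<^sup>2 / n))"
    using complex_norm_square[of a] by (simp add: t_def mult.commute)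
  then have "Re (t * a) = - ((cmod a)\<^sup>2 / n)" by simp
  moreover have "(cmod t)\<^sup>2 * n = (cmod a)\<^sup>2 / n"
    using n by (simp add: t_def norm_divide power_divide power2_eq_square)
  ultimately have "0 \<le> (norm x)\<^sup>2 - (cmod a)\<^sup>2 / n"
    using power2_norm_add_cscale[of x t y] zero_le_power2[of "norm (x + cscale t y)"]
    unfolding a_def n_def by linarith
  then have "(cmod a)\<^sup>2 \<le> (norm x * norm y)\<^sup>2"
    using n by (simp add: field_simps n_def power_mult_distrib)
  then show ?thesis unfolding a_def by (rule power2_le_imp_le) simp
qed

lemma parallelogram_law:
  "(norm ((a::'a::complex_inner) + b))\<^sup>2 + (norm (a - b))\<^sup>2 = 2 * (norm a)\<^sup>2 + 2 * (norm b)\<^sup>2"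
  using power2_norm_add_cscale[of a 1 b] power2_norm_add_cscale[of a "-1" b]
  by (simp add: cscale_of_real[of "-1", simplified])

section \<open>Riesz representation\<close>

lemma Cauchy_if_parallelogram_bound:
  fixes zs :: "nat \<Rightarrow> 'a::real_normed_vector"
  assumes mid: "\<And>m n. (norm (zs m - zs n))\<^sup>2 \<le> 2 * ((norm (zs m))\<^sup>2 - d) + 2 * ((norm (zs n))\<^sup>2 - d)"
    and approx: "\<And>n. (norm (zs n))\<^sup>2 < d + inverse (real (Suc n))"
  shows "Cauchy zs"
proof (rule CauchyI)
  fix \<epsilon> :: real assume "0 < \<epsilon>"
  then obtain M where M: "4 * inverse (real (Suc M)) < \<epsilon>\<^sup>2"
    using reals_Archimedean[of "\<epsilon>\<^sup>2 / 4"] by (auto simp: mult.commute)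
  have close: "4 * ((norm (zs k))\<^sup>2 - d) < \<epsilon>\<^sup>2" if "k \<ge> M" for k
  proof -
    have "inverse (real (Suc k)) \<le> inverse (real (Suc M))"
      using that by (simp add: le_imp_inverse_le)
    then show ?thesis using approx[of k] M by (smt (verit))
  qed
  have "norm (zs m - zs n) < \<epsilon>" if "m \<ge> M" "n \<ge> M" for m n
  proof -
    have "(norm (zs m - zs n))\<^sup>2 < \<epsilon>\<^sup>2"
      using mid[of m n] close[OF \<open>m \<ge> M\<close>] close[OF \<open>n \<ge> M\<close>] by linarith
    then show ?thesis by (rule power_less_imp_less_base) (use \<open>0 < \<epsilon>\<close> in simp)
  qed
  then show "\<exists>M. \<forall>m\<ge>M. \<forall>n\<ge>M. norm (zs m - zs n) < \<epsilon>" by blast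
qed

lemma exists_min_norm_point:
  fixes Z :: "'a::chilbert set"
  assumes "Z \<noteq> {}" and "closed Z"
    and midpoint: "\<And>a b. a \<in> Z \<Longrightarrow> b \<in> Z \<Longrightarrow> (1/2) *\<^sub>R (a + b) \<in> Z"
  shows "\<exists>z\<in>Z. \<forall>w\<in>Z. norm z \<le> norm w"
proof -
  define d where "d = (INF z\<in>Z. (norm z)\<^sup>2)"
  have bdd: "bdd_below ((\<lambda>z. (norm z)\<^sup>2) ` Z)"
    by (intro bdd_belowI[of _ 0]) auto
  have d_le: "d \<le> (norm z)\<^sup>2" if "z \<in> Z" for z
    unfolding d_def using bdd that by (rule cINF_lower)
  have "\<exists>z\<in>Z. (norm z)\<^sup>2 < d + inverse (real (Suc n))" for n
    unfolding d_def using \<open>Z \<noteq> {}\<close> by (subst cINF_less_iff[symmetric]) (simp_all add: bdd)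
  then obtain zs where zs: "\<And>n. zs n \<in> Z" "\<And>n. (norm (zs n))\<^sup>2 < d + inverse (real (Suc n))"
    by metis
  have "(norm (a - b))\<^sup>2 \<le> 2 * ((norm a)\<^sup>2 - d) + 2 * ((norm b)\<^sup>2 - d)"
    if "a \<in> Z" "b \<in> Z" for a b
  proof -
    have "d \<le> (norm ((1/2) *\<^sub>R (a + b)))\<^sup>2" using d_le midpoint that by blast
    also have "\<dots> = (norm (a + b))\<^sup>2 / 4" by (simp add: power2_eq_square)
    finally show ?thesis using parallelogram_law[of a b] by simp
  qed
  then have "Cauchy zs"
    using zs by (intro Cauchy_if_parallelogram_bound[where d = d]) auto
  then obtain z where lim: "zs \<longlonglongrightarrow> z"
    using Cauchy_convergent convergent_def by blast
  have "z \<in> Z"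
    using \<open>closed Z\<close> zs(1) lim by (rule closed_sequentially)
  moreover have "(norm z)\<^sup>2 \<le> d"
  proof (rule LIMSEQ_le)
    show "(\<lambda>n. (norm (zs n))\<^sup>2) \<longlonglongrightarrow> (norm z)\<^sup>2" by (intro tendsto_intros lim)
    show "(\<lambda>n. d + inverse (real (Suc n))) \<longlonglongrightarrow> d"
      using tendsto_add[OF tendsto_const LIMSEQ_inverse_real_of_nat, of d] by simp
    show "\<exists>N. \<forall>n\<ge>N. (norm (zs n))\<^sup>2 \<le> d + inverse (real (Suc n))"
      using zs(2) less_imp_le by blast
  qed
  ultimately show ?thesis
    using d_le by (metis order.trans power2_le_imp_le norm_ge_zero)
qed

lemma min_norm_point_orthogonal:
  fixes \<phi> :: "'a::complex_inner \<Rightarrow> complex"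
  assumes add: "\<And>x y. \<phi> (x + y) = \<phi> x + \<phi> y"
    and sc: "\<And>c x. \<phi> (cscale c x) = c * \<phi> x"
    and z: "\<phi> z = 1" and min: "\<And>w. \<phi> w = 1 \<Longrightarrow> norm z \<le> norm w"
    and k: "\<phi> k = 0"
  shows "cinner z k = 0"
proof (rule ccontr)
  assume "cinner z k \<noteq> 0"
  define \<alpha> where "\<alpha> = cinner z k"
  define A where "A = (cmod \<alpha>)\<^sup>2"
  have A: "A > 0" using \<open>cinner z k \<noteq> 0\<close> by (simp add: A_def \<alpha>_def)
  define nk where "nk = (norm k)\<^sup>2"
  define \<rho> where "\<rho> = 1 / (nk + 1)"
  have "nk \<ge> 0" by (simp add: nk_def)
  then have \<rho>: "\<rho> > 0" "\<rho> * nk < 1" by (simp_all add: \<rho>_def)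
  \<comment> \<open>moving from \<open>z\<close> in the direction \<open>- cnj \<alpha> k\<close> stays in \<open>\<phi> = 1\<close> but shortens \<open>z\<close>\<close>
  define t where "t = - complex_of_real \<rho> * cnj \<alpha>"
  have "\<phi> (z + cscale t k) = 1" using z k by (simp add: add sc)
  then have "(norm z)\<^sup>2 \<le> (norm (z + cscale t k))\<^sup>2" by (simp add: min power_mono)
  also have "\<dots> = (norm z)\<^sup>2 + 2 * Re (t * \<alpha>) + (cmod t)\<^sup>2 * nk"
    unfolding \<alpha>_def nk_def by (rule power2_norm_add_cscale)
  also have "t * \<alpha> = complex_of_real (- (\<rho> * A))"
    using complex_norm_square[of \<alpha>] by (simp add: t_def A_def mult.commute mult.left_commute)
  also have "(cmod t)\<^sup>2 = \<rho>\<^sup>2 * A"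
    using \<rho> by (simp add: t_def norm_mult A_def power_mult_distrib)
  finally have "0 \<le> \<rho> * A * (\<rho> * nk - 2)" by (simp add: algebra_simps power2_eq_square)
  moreover have "\<rho> * A > 0" using \<rho> A by simp
  ultimately show False using \<rho> by (simp add: zero_le_mult_iff)
qed

lemma riesz_representation:
  fixes \<phi> :: "'a::chilbert \<Rightarrow> complex"
  assumes add: "\<And>x y. \<phi> (x + y) = \<phi> x + \<phi> y"
    and sc: "\<And>c x. \<phi> (cscale c x) = c * \<phi> x"
    and bd: "\<And>x. cmod (\<phi> x) \<le> norm x * K"
  shows "\<exists>y. \<forall>x. \<phi> x = cinner y x"
proof (cases "\<forall>x. \<phi> x = 0")
  case True
  then show ?thesis by (intro exI[of _ 0]) simp
next
  case False
  then obtain x0 where x0: "\<phi> x0 \<noteq> 0" by blast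
  have "bounded_linear \<phi>"
  proof (rule bounded_linear_intro[where K = K])
    show "\<phi> (r *\<^sub>R x) = r *\<^sub>R \<phi> x" for r x
      using sc[of "complex_of_real r" x] by (simp add: scaleR_cscale scaleR_conv_of_real)
  qed (use add bd in auto)
  then have "closed {z. \<phi> z = 1}"
    by (intro closed_Collect_eq continuous_on_const linear_continuous_on)
  moreover have "{z. \<phi> z = 1} \<noteq> {}"
    using x0 sc[of "1 / \<phi> x0" x0] by auto
  moreover have "\<phi> ((1/2) *\<^sub>R (a + b)) = 1" if "\<phi> a = 1" "\<phi> b = 1" for a b
    using that add sc[of "1/2" "a + b"] by (simp add: scaleR_cscale)
  ultimately obtain z where z: "\<phi> z = 1" and min: "\<And>w. \<phi> w = 1 \<Longrightarrow> norm z \<le> norm w"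
    using exists_min_norm_point[of "{z. \<phi> z = 1}"] by auto
  have "z \<noteq> 0" using z sc[of 0 0] by auto
  then have nz: "(norm z)\<^sup>2 > 0" by simp
  have "\<phi> x = cinner (cscale (complex_of_real (1 / (norm z)\<^sup>2)) z) x" for x
  proof -
    have "\<phi> (x - cscale (\<phi> x) z) = 0"
      using add[of "x - cscale (\<phi> x) z" "cscale (\<phi> x) z"] z by (simp add: sc)
    then have "cinner z (x - cscale (\<phi> x) z) = 0"
      using min_norm_point_orthogonal[OF add sc z min] by blast
    then have "cinner z x = \<phi> x * complex_of_real ((norm z)\<^sup>2)"
      by (simp add: cinner_diff_right cinner_cscale_right cinner_self)
    then show ?thesis using nz by (simp add: cinner_cscale_left)
  qed
  then show ?thesis by blast
qed

definition clinear :: "('a::complex_inner \<Rightarrow> 'b::complex_inner) \<Rightarrow> bool" where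
  "clinear f \<longleftrightarrow> (\<forall>x y. f (x + y) = f x + f y) \<and> (\<forall>c x. f (cscale c x) = cscale c (f x))"

lemma clinear_add: "clinear f \<Longrightarrow> f (x + y) = f x + f y"
  by (simp add: clinear_def)

lemma clinear_cscale: "clinear f \<Longrightarrow> f (cscale c x) = cscale c (f x)"
  by (simp add: clinear_def)

lemma clinear_zero: "clinear f \<Longrightarrow> f 0 = 0"
  using clinear_cscale[of f 0 0] by simp

lemma clinear_diff: "clinear f \<Longrightarrow> f (x - y) = f x - f y"
  using clinear_add[of f "x - y" y] by (simp add: eq_diff_eq)

lemma clinear_compose: "clinear f \<Longrightarrow> clinear g \<Longrightarrow> clinear (\<lambda>x. f (g x))"
  by (simp add: clinear_def)

lemma bounded_clinear_imp_clinear: "bounded_clinear T \<Longrightarrow> clinear T"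
  by (simp add: bounded_clinear_def clinear_def)

lemma adjoint_exists:
  fixes T :: "'a::chilbert \<Rightarrow> 'a"
  assumes T: "bounded_clinear T"
  shows "\<exists>S. \<forall>x y. cinner (T x) y = cinner x (S y)"
proof -
  obtain K where K: "\<And>x. norm (T x) \<le> norm x * K"
    using T unfolding bounded_clinear_def by blast
  have T_lin: "clinear T" using T by (rule bounded_clinear_imp_clinear)
  have "\<exists>v. \<forall>x. cinner y (T x) = cinner v x" for y
  proof (rule riesz_representation[where K = "K * norm y"])
    show "cinner y (T (x + z)) = cinner y (T x) + cinner y (T z)" for x z
      by (simp add: clinear_add[OF T_lin] cinner_add_right)
    show "cinner y (T (cscale c x)) = c * cinner y (T x)" for c x
      by (simp add: clinear_cscale[OF T_lin] cinner_cscale_right)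
    show "cmod (cinner y (T x)) \<le> norm x * (K * norm y)" for x
      using order_trans[OF cmod_cinner_le[of y "T x"] mult_left_mono[OF K, of "norm y"]]
      by (simp add: ac_simps)
  qed
  then obtain S where S: "\<And>y x. cinner y (T x) = cinner (S y) x" by metis
  have "cinner (T x) y = cinner x (S y)" for x y
    using S[of y x] cinner_commute[of "T x" y] cinner_commute[of "S y" x] by simp
  then show ?thesis by blast
qed

lemma cinner_cadj:
  fixes T :: "'a::chilbert \<Rightarrow> 'a"
  assumes "bounded_clinear T"
  shows "cinner (T x) y = cinner x (cadj T y)"
proof -
  obtain S where S: "\<forall>x y. cinner (T x) y = cinner x (S y)"
    using adjoint_exists[OF assms] by blast
  have "cadj T = S" unfolding cadj_def
  proof (rule the_equality)
    fix S' assume "\<forall>x y. cinner (T x) y = cinner x (S' y)"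
    with S show "S' = S" by (metis cinner_right_ext ext)
  qed (rule S)
  with S show ?thesis by simp
qed

lemma cinner_cadj_left:
  fixes T :: "'a::chilbert \<Rightarrow> 'a"
  assumes "bounded_clinear T"
  shows "cinner (cadj T y) x = cinner y (T x)"
  using cinner_cadj[OF assms, of x y] cinner_commute[of "T x" y] cinner_commute[of x "cadj T y"]
  by simp

lemma clinear_cadj:
  fixes T :: "'a::chilbert \<Rightarrow> 'a"
  assumes "bounded_clinear T"
  shows "clinear (cadj T)"
  unfolding clinear_def
  by (intro conjI allI; rule cinner_right_ext)
    (simp_all add: cinner_cadj[OF assms, symmetric] cinner_add_right cinner_cscale_right)

lemma cinner_funpow_cadj:
  fixes T :: "'a::chilbert \<Rightarrow> 'a"
  assumes "bounded_clinear T"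
  shows "cinner x ((cadj T ^^ j) y) = cinner ((T ^^ j) x) y"
proof (induction j arbitrary: x)
  case 0 then show ?case by simp
next
  case (Suc j)
  have "cinner x ((cadj T ^^ Suc j) y) = cinner (T x) ((cadj T ^^ j) y)"
    by (simp add: funpow_swap1 cinner_cadj[OF assms])
  also have "\<dots> = cinner ((T ^^ Suc j) x) y" by (simp add: Suc.IH funpow_swap1)
  finally show ?case .
qed

lemma opos_self_adjoint:
  fixes S :: "'a::complex_inner \<Rightarrow> 'a"
  assumes S: "clinear S" and P: "opos S"
  shows "cinner x (S y) = cinner (S x) y"
proof -
  have im0: "Im (cinner z (S z)) = 0" for z using P unfolding opos_def by blast
  \<comment> \<open>polarisation with \<open>x + y\<close> and \<open>x + \<i> y\<close>\<close>
  have "cinner (x + y) (S (x + y)) = cinner x (S x) + cinner y (S y) + (cinner x (S y) + cinner y (S x))"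
    by (simp add: clinear_add[OF S] cinner_add_left cinner_add_right algebra_simps)
  then have h1: "Im (cinner x (S y) + cinner y (S x)) = 0"
    using im0[of "x + y"] im0[of x] im0[of y] by simp
  have "cinner (x + cscale \<i> y) (S (x + cscale \<i> y))
     = cinner x (S x) + cinner y (S y) + \<i> * (cinner x (S y) - cinner y (S x))"
    by (simp add: clinear_add[OF S] clinear_cscale[OF S] cinner_add_left cinner_add_right
        cinner_cscale_left cinner_cscale_right algebra_simps)
  then have h2: "Re (cinner x (S y) - cinner y (S x)) = 0"
    using im0[of "x + cscale \<i> y"] im0[of x] im0[of y] by simp
  show ?thesis using h1 h2 cinner_commute[of "S x" y] by (simp add: complex_eq_iff)
qed

section \<open>Concave operators and their defect\<close>

lemma concave_seq_nonneg_imp_mono: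
  fixes a :: "nat \<Rightarrow> real"
  assumes concave: "\<And>n. a (Suc (Suc n)) - 2 * a (Suc n) + a n \<le> 0"
    and nonneg: "\<And>n. 0 \<le> a n"
  shows "a 0 \<le> a 1"
proof (rule ccontr)
  assume "\<not> a 0 \<le> a 1"
  define d where "d = a 1 - a 0"
  have "d < 0" using \<open>\<not> a 0 \<le> a 1\<close> by (simp add: d_def)
  have step: "a (Suc n) - a n \<le> d" for n
  proof (induction n)
    case (Suc n) then show ?case using concave[of n] by linarith
  qed (simp add: d_def)
  have bound: "a n \<le> a 0 + real n * d" for n
  proof (induction n)
    case (Suc n) then show ?case using step[of n] by (simp add: algebra_simps)
  qed simp
  obtain n where "a 0 < real n * (- d)"
    using ex_less_of_nat_mult[of "- d" "a 0"] \<open>d < 0\<close> by auto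
  then show False using bound[of n] nonneg[of n] by (simp add: algebra_simps)
qed

lemma concave_op_norm_ineq:
  fixes T :: "'a::chilbert \<Rightarrow> 'a"
  assumes T: "bounded_clinear T" and "concave_op T"
  shows "(norm (T (T x)))\<^sup>2 - 2 * (norm (T x))\<^sup>2 + (norm x)\<^sup>2 \<le> 0"
proof -
  have "0 \<le> Re (cinner x (- (cadj T (cadj T (T (T x))) - 2 *\<^sub>R cadj T (T x) + x)))"
    using \<open>concave_op T\<close> unfolding concave_op_def oneg_def opos_def by blast
  also have "cinner x (- (cadj T (cadj T (T (T x))) - 2 *\<^sub>R cadj T (T x) + x))
    = - (cinner (T (T x)) (T (T x)) - complex_of_real 2 * cinner (T x) (T x) + cinner x x)"
    by (simp add: cinner_minus_right cinner_add_right cinner_diff_right cinner_scaleR_right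
        cinner_cadj[OF T, symmetric])
  finally show ?thesis by (simp add: cinner_self)
qed

lemma concave_op_expansive:
  fixes T :: "'a::chilbert \<Rightarrow> 'a"
  assumes "bounded_clinear T" and "concave_op T"
  shows "norm x \<le> norm (T x)"
proof -
  have "(norm ((T ^^ 0) x))\<^sup>2 \<le> (norm ((T ^^ 1) x))\<^sup>2"
  proof (rule concave_seq_nonneg_imp_mono)
    show "(norm ((T ^^ Suc (Suc n)) x))\<^sup>2 - 2 * (norm ((T ^^ Suc n) x))\<^sup>2 + (norm ((T ^^ n) x))\<^sup>2 \<le> 0"
      for n using concave_op_norm_ineq[OF assms, of "(T ^^ n) x"] by simp
  qed simp
  then have "(norm x)\<^sup>2 \<le> (norm (T x))\<^sup>2" by simp
  then show ?thesis by (rule power2_le_imp_le) simp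
qed

lemma Delta_self_adjoint:
  fixes T :: "'a::chilbert \<Rightarrow> 'a"
  assumes T: "bounded_clinear T"
  shows "cinner a (Delta T b) = cinner (Delta T a) b"
  by (simp add: Delta_def cinner_diff_right cinner_diff_left cinner_cadj_left[OF T]
      cinner_cadj[OF T, symmetric])

lemma cinner_Delta:
  fixes T :: "'a::chilbert \<Rightarrow> 'a"
  assumes T: "bounded_clinear T"
  shows "cinner x (Delta T x) = complex_of_real ((norm (T x))\<^sup>2 - (norm x)\<^sup>2)"
  by (simp add: Delta_def cinner_diff_right cinner_cadj[OF T, symmetric] cinner_self)

lemma rank_one_positive_eq_outer:
  fixes A :: "'a::complex_inner \<Rightarrow> 'a"
  assumes sa: "\<And>a b. cinner a (A b) = cinner (A a) b"
    and pos: "\<And>x. 0 \<le> Re (cinner x (A x))"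
    and "rank_one A"
  shows "\<exists>e. e \<noteq> 0 \<and> (\<forall>x. A x = cscale (cinner e x) e)"
proof -
  obtain e0 where e0: "e0 \<noteq> 0" and rg: "range A = {cscale c e0 | c. True}"
    using \<open>rank_one A\<close> unfolding rank_one_def by blast
  have "\<exists>c. A x = cscale c e0" for x
    using rangeI[of A x] unfolding rg by blast
  then obtain f where f: "\<And>x. A x = cscale (f x) e0" by metis
  define E0 where "E0 = (norm e0)\<^sup>2"
  have E0: "E0 > 0" using e0 by (simp add: E0_def)
  have cee: "cinner e0 e0 = complex_of_real E0" by (simp add: E0_def cinner_self)
  define g where "g = Re (cinner e0 (A e0)) / E0\<^sup>2"
  have "g \<ge> 0" using pos[of e0] E0 by (simp add: g_def)
  \<comment> \<open>self-adjointness forces \<open>f\<close> to be a multiple of \<open>cinner e0\<close>, positivity makes the factor \<open>g \<ge> 0\<close>\<close>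
  have "cinner e0 (A e0) = complex_of_real (Re (cinner e0 (A e0)))"
    using sa[of e0 e0] cinner_commute[of "A e0" e0] by (simp add: complex_eq_iff)
  then have fe0: "f e0 = complex_of_real (g * E0)"
    using E0 by (simp add: f cinner_cscale_right cee g_def power2_eq_square field_simps)
  have fx: "f x = complex_of_real g * cinner e0 x" for x
  proof -
    have "f x * complex_of_real E0 = cnj (f e0) * cinner e0 x"
      using sa[of e0 x] by (simp add: f cinner_cscale_right cinner_cscale_left cee)
    then show ?thesis using E0 fe0 by (simp add: field_simps)
  qed
  have "g \<noteq> 0"
  proof
    assume "g = 0"
    then have "range A = {0}" by (auto simp: f fx)
    with rg e0 show False by (metis (mono_tags, lifting) cscale_one mem_Collect_eq singletonD)
  qed
  define e where "e = cscale (complex_of_real (sqrt g)) e0"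
  have "A x = cscale (cinner e x) e" for x
  proof -
    have "complex_of_real (sqrt g) * complex_of_real (sqrt g) = complex_of_real g"
      using \<open>g \<ge> 0\<close> by (simp flip: of_real_mult)
    then show ?thesis
      by (simp add: e_def f fx cinner_cscale_left cscale_cscale ac_simps)
  qed
  moreover have "e \<noteq> 0"
    using e0 \<open>g \<ge> 0\<close> \<open>g \<noteq> 0\<close> norm_cscale[of "complex_of_real (sqrt g)" e0] by (auto simp: e_def)
  ultimately show ?thesis by blast
qed

lemma Delta_eq_outer_if_rank_one:
  fixes T :: "'a::chilbert \<Rightarrow> 'a"
  assumes T: "bounded_clinear T" and "concave_op T" and "rank_one (Delta T)"
  shows "\<exists>e. e \<noteq> 0 \<and> (\<forall>x. Delta T x = cscale (cinner e x) e)"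
proof (rule rank_one_positive_eq_outer)
  show "0 \<le> Re (cinner x (Delta T x))" for x
    using concave_op_expansive[OF T \<open>concave_op T\<close>, of x]
    by (simp add: cinner_Delta[OF T] power_mono)
qed (use Delta_self_adjoint[OF T] \<open>rank_one (Delta T)\<close> in auto)

lemma positive_sqrt_outer_factor:
  fixes S :: "'a::complex_inner \<Rightarrow> 'a"
  assumes S: "clinear S" and P: "opos S" and SS: "\<And>x. S (S x) = cscale (cinner e x) e"
  shows "S x = cscale (cinner e x / complex_of_real ((norm e)\<^sup>2)) (S e)"
proof (cases "e = 0")
  case False
  \<comment> \<open>\<open>\<parallel>S y\<parallel>\<^sup>2 = \<langle>y, S (S y)\<rangle> = \<bar>\<langle>e, y\<rangle>\<bar>\<^sup>2\<close>, so \<open>S\<close> vanishes on the orthogonal complement of \<open>e\<close>\<close>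
  define y where "y = x - cscale (cinner e x / complex_of_real ((norm e)\<^sup>2)) e"
  have "cinner e y = 0"
    using False by (simp add: y_def cinner_diff_right cinner_cscale_right cinner_self)
  then have "cinner (S y) (S y) = 0"
    by (simp add: opos_self_adjoint[OF S P, symmetric] SS cinner_cscale_right)
  then have "S y = 0" by (simp add: cinner_eq_zero_iff)
  then show ?thesis by (simp add: y_def clinear_diff[OF S] clinear_cscale[OF S])
next
  case True
  have "cinner (S x) (S x) = 0"
    by (simp add: opos_self_adjoint[OF S P, symmetric] SS True)
  then show ?thesis by (simp add: cinner_eq_zero_iff True)
qed

lemma positive_sqrt_outer_eq:
  fixes S :: "'a::complex_inner \<Rightarrow> 'a"
  assumes S: "clinear S" and P: "opos S" and SS: "\<And>x. S (S x) = cscale (cinner e x) e"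
    and "e \<noteq> 0"
  shows "S x = cscale (complex_of_real (1 / norm e) * cinner e x) e"
proof -
  define E where "E = (norm e)\<^sup>2"
  have E: "E > 0" using \<open>e \<noteq> 0\<close> by (simp add: E_def)
  have cee: "cinner e e = complex_of_real E" by (simp add: cinner_self E_def)
  note S_eq = positive_sqrt_outer_factor[OF S P SS, folded E_def]
  define a where "a = Re (cinner e (S e))"
  have a: "cinner e (S e) = complex_of_real a" "0 \<le> a"
    using P unfolding opos_def a_def by (simp_all add: complex_eq_iff)
  have Se_eq: "cscale (complex_of_real (a / E)) (S e) = cscale (complex_of_real E) e"
    using S_eq[of "S e"] by (simp add: SS cee a)
  have "a \<noteq> 0"
  proof
    assume "a = 0"
    then have "cscale (complex_of_real E) e = 0" using Se_eq by simp
    then show False using E \<open>e \<noteq> 0\<close> norm_cscale[of "complex_of_real E" e] by auto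
  qed
  have "complex_of_real (E / a) * complex_of_real (a / E) = 1"
    using E \<open>a \<noteq> 0\<close> by (simp flip: of_real_mult)
  then have "S e = cscale (complex_of_real (E / a)) (cscale (complex_of_real (a / E)) (S e))"
    by (simp add: cscale_cscale)
  also have "\<dots> = cscale (complex_of_real (E * E / a)) e"
    by (simp only: Se_eq cscale_cscale) (simp add: field_simps)
  finally have Se: "S e = cscale (complex_of_real (E * E / a)) e" .
  have "complex_of_real (a / E) * complex_of_real a = complex_of_real E * complex_of_real E"
    using arg_cong[OF Se_eq, of "cinner e"] by (simp add: cinner_cscale_right a cee)
  then have "a / E * a = E * E" by (metis of_real_eq_iff of_real_mult)
  then have "a * a = E * E * E" using E by (simp add: field_simps)
  then have "a\<^sup>2 = (norm e ^ 3)\<^sup>2"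
    by (simp add: E_def power2_eq_square power3_eq_cube)
  then have "a = norm e ^ 3"
    using a(2) power2_eq_iff_nonneg[of a "norm e ^ 3"] by simp
  then have "E * E / a = norm e"
    using E by (simp add: E_def power2_eq_square power3_eq_cube field_simps)
  then show ?thesis
    using S_eq[of x] E by (simp add: Se cscale_cscale E_def power2_eq_square field_simps)
qed

lemma positive_sqrt_outer:
  fixes e :: "'a::complex_inner"
  defines "R \<equiv> \<lambda>x. cscale (complex_of_real (1 / norm e) * cinner e x) e"
  shows "bounded_clinear R" "opos R" "R (R x) = cscale (cinner e x) e"
proof -
  show "bounded_clinear R"
    unfolding bounded_clinear_def
  proof (intro conjI allI exI)
    show "R (x + y) = R x + R y" for x y
      by (simp add: R_def cinner_add_right distrib_left cscale_add_left del: of_real_divide)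
    show "R (cscale c x) = cscale c (R x)" for c x
      by (simp add: R_def cinner_cscale_right cscale_cscale ac_simps)
    show "norm (R x) \<le> norm x * norm e" for x
      using cmod_cinner_le[of e x]
      by (cases "e = 0") (simp_all add: R_def norm_cscale norm_mult norm_divide mult.commute)
  qed
  show "opos R"
    unfolding opos_def
  proof
    fix x
    have "cinner x (R x) = complex_of_real (1 / norm e * (cmod (cinner e x))\<^sup>2)"
      using complex_norm_square[of "cinner e x"]
      by (simp add: R_def cinner_cscale_right cinner_commute[of x e] ac_simps)
    then show "Im (cinner x (R x)) = 0 \<and> 0 \<le> Re (cinner x (R x))" by simp
  qed
  show "R (R x) = cscale (cinner e x) e"
    by (cases "e = 0")
      (simp_all add: R_def cinner_cscale_right cinner_self power2_eq_square cscale_cscale field_simps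
        flip: of_real_mult)
qed

lemma osqrt_outer:
  fixes e :: "'a::complex_inner"
  assumes "e \<noteq> 0"
  shows "osqrt (\<lambda>x. cscale (cinner e x) e) = (\<lambda>x. cscale (complex_of_real (1 / norm e) * cinner e x) e)"
  unfolding osqrt_def
proof (rule the_equality)
  show "S = (\<lambda>x. cscale (complex_of_real (1 / norm e) * cinner e x) e)"
    if "bounded_clinear S \<and> opos S \<and> (\<forall>x. S (S x) = cscale (cinner e x) e)" for S
    using that positive_sqrt_outer_eq[OF bounded_clinear_imp_clinear _ _ assms] by blast
qed (use positive_sqrt_outer in blast)

definition id_plus_outer :: "'a::complex_inner \<Rightarrow> real \<Rightarrow> 'a \<Rightarrow> 'a" where
  "id_plus_outer e a x = x + cscale (complex_of_real a * cinner e x) e"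

lemma id_plus_outer_zero [simp]: "id_plus_outer e 0 x = x"
  by (simp add: id_plus_outer_def)

lemma cinner_id_plus_outer:
  "cinner e (id_plus_outer e a x) = complex_of_real (1 + a * (norm e)\<^sup>2) * cinner e x"
  by (simp add: id_plus_outer_def cinner_add_right cinner_cscale_right cinner_self algebra_simps)

lemma id_plus_outer_add_outer:
  "id_plus_outer e a x + cscale (complex_of_real b * cinner e x) e = id_plus_outer e (a + b) x"
  by (simp add: id_plus_outer_def cscale_add_left distrib_right add.assoc)

lemma id_plus_outer_comp:
  "id_plus_outer e a (id_plus_outer e b x) = id_plus_outer e (a + b + a * b * (norm e)\<^sup>2) x"
proof -
  have "id_plus_outer e a (id_plus_outer e b x)
      = id_plus_outer e b x + cscale (complex_of_real (a * (1 + b * (norm e)\<^sup>2)) * cinner e x) e"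
    by (simp add: id_plus_outer_def[of e a] cinner_id_plus_outer mult.assoc)
  also have "\<dots> = id_plus_outer e (b + a * (1 + b * (norm e)\<^sup>2)) x"
    by (rule id_plus_outer_add_outer)
  also have "b + a * (1 + b * (norm e)\<^sup>2) = a + b + a * b * (norm e)\<^sup>2"
    by (simp add: algebra_simps)
  finally show ?thesis .
qed

lemma id_plus_outer_self_adjoint:
  "cinner (id_plus_outer e a x) y = cinner x (id_plus_outer e a y)"
  by (simp add: id_plus_outer_def cinner_add_left cinner_add_right cinner_cscale_left
      cinner_cscale_right cinner_commute[of x e] algebra_simps)

lemma clinear_id_plus_outer: "clinear (id_plus_outer e a)"
  unfolding clinear_def
  by (simp add: id_plus_outer_def cinner_add_right cinner_cscale_right distrib_left
      cscale_add_left cscale_add_right cscale_cscale algebra_simps)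

lemma id_plus_outer_inverse:
  assumes "a + b + a * b * (norm e)\<^sup>2 = 0"
  shows "id_plus_outer e a (id_plus_outer e b x) = x" "id_plus_outer e b (id_plus_outer e a x) = x"
proof -
  have "b + a + b * a * (norm e)\<^sup>2 = 0" using assms by (simp add: algebra_simps)
  with assms show "id_plus_outer e a (id_plus_outer e b x) = x" "id_plus_outer e b (id_plus_outer e a x) = x"
    by (simp_all only: id_plus_outer_comp id_plus_outer_zero)
qed

lemma id_plus_outer_square:
  fixes e :: "'a::complex_inner"
  assumes "e \<noteq> 0" "p < 1"
  defines "k \<equiv> (1 - sqrt (1 - p)) / (norm e)\<^sup>2"
  shows "id_plus_outer e (- k) (id_plus_outer e (- k) x) = id_plus_outer e (- (p / (norm e)\<^sup>2)) x"
proof -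
  have "(sqrt (1 - p))\<^sup>2 = 1 - p" using \<open>p < 1\<close> by simp
  then have "- k + - k + - k * - k * (norm e)\<^sup>2 = - (p / (norm e)\<^sup>2)"
    using \<open>e \<noteq> 0\<close> by (simp add: k_def field_simps power2_eq_square)
  then show ?thesis by (simp add: id_plus_outer_comp)
qed

section \<open>A criterion for subnormality\<close>

lemma l2_if_finite_support:
  fixes f :: "nat \<Rightarrow> 'a::complex_inner"
  assumes "\<And>n. n \<ge> m \<Longrightarrow> f n = 0"
  shows "f \<in> l2"
  unfolding l2_def mem_Collect_eq by (rule summable_finite[of "{..<m}"]) (use assms in auto)

lemma l2inner_finite_support:
  fixes f g :: "nat \<Rightarrow> 'a::complex_inner"
  assumes "\<And>n. n \<ge> m \<Longrightarrow> f n = 0 \<or> g n = 0"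
  shows "l2inner f g = (\<Sum>n<m. cinner (f n) (g n))"
  unfolding l2inner_def
proof (rule suminf_finite)
  show "cinner (f n) (g n) = 0" if "n \<notin> {..<m}" for n
    using assms[of n] that by auto
qed simp

lemma sum_lessThan_3: "(\<Sum>n<3. F n) = F 0 + F 1 + F (2::nat)"
  by (simp add: numeral_3_eq_3 numeral_2_eq_2)

text \<open>An isometry \<open>V\<close> with adjoint \<open>Vs\<close> extends to the unitary
  \<open>(x, y) \<mapsto> (V x + (I - V Vs) y, Vs y)\<close> on \<open>H \<oplus> H\<close>.\<close>

locale isometry_with_adjoint =
  fixes V Vs :: "'a::complex_inner \<Rightarrow> 'a"
  assumes clinear_V: "clinear V" and clinear_Vs: "clinear Vs"
    and adjoint: "\<And>x y. cinner (V x) y = cinner x (Vs y)"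
    and isometric: "\<And>x. Vs (V x) = x"
begin

definition defect :: "'a \<Rightarrow> 'a" where
  "defect z = z - V (Vs z)"

lemma clinear_defect: "clinear defect"
  using clinear_V clinear_Vs
  by (simp add: clinear_def defect_def cscale_diff_right algebra_simps)

lemma Vs_defect: "Vs (defect z) = 0"
  by (simp add: defect_def clinear_diff[OF clinear_Vs] isometric)

lemma defect_V: "defect (V z) = 0"
  by (simp add: defect_def isometric)

lemma defect_defect: "defect (defect z) = defect z"
  by (simp add: defect_def[of "defect z"] Vs_defect clinear_zero[OF clinear_V])

lemma adjoint_Vs: "cinner (Vs y) x = cinner y (V x)"
  using adjoint[of x y] cinner_commute[of "V x" y] cinner_commute[of x "Vs y"] by simp

lemma unitary_extension_adjoint:
  "cinner (V x + defect y) a + cinner (Vs y) b = cinner x (Vs a) + cinner y (defect a + V b)"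
  by (simp add: defect_def cinner_add_left cinner_add_right cinner_diff_left cinner_diff_right
      adjoint adjoint_Vs)

lemma unitary_extension_left_inverse:
  "Vs (V x + defect y) = x" "defect (V x + defect y) + V (Vs y) = y"
  by (simp_all add: clinear_add[OF clinear_Vs] clinear_add[OF clinear_defect] isometric
      Vs_defect defect_V defect_defect) (simp add: defect_def)

lemma unitary_extension_right_inverse:
  "V (Vs a) + defect (defect a + V b) = a" "Vs (defect a + V b) = b"
  by (simp_all add: clinear_add[OF clinear_Vs] clinear_add[OF clinear_defect] isometric
      Vs_defect defect_V defect_defect) (simp add: defect_def)

lemma power2_norm_unitary_extension:
  "(norm (V x + defect y))\<^sup>2 + (norm (Vs y))\<^sup>2 = (norm x)\<^sup>2 + (norm y)\<^sup>2"
proof -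
  have "cinner (V x + defect y) (V x + defect y) + cinner (Vs y) (Vs y) = cinner x x + cinner y y"
    using unitary_extension_adjoint[of x y "V x + defect y" "Vs y"]
    by (simp add: unitary_extension_left_inverse)
  then have "complex_of_real ((norm (V x + defect y))\<^sup>2 + (norm (Vs y))\<^sup>2)
      = complex_of_real ((norm x)\<^sup>2 + (norm y)\<^sup>2)"
    by (simp add: cinner_self)
  then show ?thesis by (simp only: of_real_eq_iff)
qed

definition normal_extension :: "complex \<Rightarrow> (nat \<Rightarrow> 'a) \<Rightarrow> nat \<Rightarrow> 'a" where
  "normal_extension d f = (\<lambda>n. if n = 0 then V (f 0) + defect (f 1) else if n = 1 then Vs (f 1)
     else if n = 2 then cscale d (f 2) else 0)"

definition normal_extension_adj :: "complex \<Rightarrow> (nat \<Rightarrow> 'a) \<Rightarrow> nat \<Rightarrow> 'a" where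
  "normal_extension_adj d g = (\<lambda>n. if n = 0 then Vs (g 0) else if n = 1 then defect (g 0) + V (g 1)
     else if n = 2 then cscale (cnj d) (g 2) else 0)"

lemma l2norm_normal_extension_le:
  assumes "f \<in> l2"
  shows "l2norm (normal_extension d f) \<le> max 1 (cmod d) * l2norm f"
proof -
  define M where "M = max 1 (cmod d)"
  have "M \<ge> 1" by (simp add: M_def)
  have "(\<Sum>n. (norm (normal_extension d f n))\<^sup>2)
      = (norm (f 0))\<^sup>2 + (norm (f 1))\<^sup>2 + (cmod d)\<^sup>2 * (norm (f 2))\<^sup>2"
    by (subst suminf_finite[of "{..<3}"])
      (auto simp: sum_lessThan_3 normal_extension_def norm_cscale power_mult_distrib
        power2_norm_unitary_extension)
  also have "\<dots> \<le> M\<^sup>2 * (\<Sum>n<3. (norm (f n))\<^sup>2)"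
  proof -
    have "1 \<le> M\<^sup>2" "(cmod d)\<^sup>2 \<le> M\<^sup>2"
      using \<open>M \<ge> 1\<close> by (simp_all add: M_def power_mono)
    then show ?thesis
      by (simp add: sum_lessThan_3 distrib_left add_mono mult_right_mono
          order.trans[OF _ mult_right_mono[of 1 "M\<^sup>2"]])
  qed
  also have "\<dots> \<le> M\<^sup>2 * (\<Sum>n. (norm (f n))\<^sup>2)"
    using assms by (intro mult_left_mono sum_le_suminf) (auto simp: l2_def)
  finally have "sqrt (\<Sum>n. (norm (normal_extension d f n))\<^sup>2) \<le> sqrt (M\<^sup>2 * (\<Sum>n. (norm (f n))\<^sup>2))"
    by (rule real_sqrt_le_mono)
  then show ?thesis
    using \<open>M \<ge> 1\<close> by (simp add: l2norm_def M_def real_sqrt_mult)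
qed

lemma normal_l2_normal_extension: "normal_l2 (normal_extension d)"
  unfolding normal_l2_def
proof (intro conjI ballI allI)
  show "normal_extension d f \<in> l2" for f
    by (rule l2_if_finite_support[of 3]) (simp add: normal_extension_def)
  show "normal_extension d (\<lambda>n. f n + g n) = (\<lambda>n. normal_extension d f n + normal_extension d g n)"
    for f g
    by (rule ext) (simp add: normal_extension_def clinear_add[OF clinear_V] clinear_add[OF clinear_Vs]
        clinear_add[OF clinear_defect] cscale_add_right algebra_simps)
  show "normal_extension d (\<lambda>n. cscale c (f n)) = (\<lambda>n. cscale c (normal_extension d f n))" for f c
    by (rule ext) (simp add: normal_extension_def clinear_cscale[OF clinear_V]
        clinear_cscale[OF clinear_Vs] clinear_cscale[OF clinear_defect] cscale_add_right
        cscale_cscale mult.commute)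
  show "\<exists>K. \<forall>f\<in>l2. l2norm (normal_extension d f) \<le> K * l2norm f"
    using l2norm_normal_extension_le by blast
  show "\<exists>M. (\<forall>g\<in>l2. M g \<in> l2) \<and>
      (\<forall>f\<in>l2. \<forall>g\<in>l2. l2inner (normal_extension d f) g = l2inner f (M g)) \<and>
      (\<forall>f\<in>l2. M (normal_extension d f) = normal_extension d (M f))"
  proof (intro exI[of _ "normal_extension_adj d"] conjI ballI)
    show "normal_extension_adj d g \<in> l2" for g
      by (rule l2_if_finite_support[of 3]) (simp add: normal_extension_adj_def)
    show "l2inner (normal_extension d f) g = l2inner f (normal_extension_adj d g)" for f g
      using unitary_extension_adjoint[of "f 0" "f 1" "g 0" "g 1"]
      by (simp add: l2inner_finite_support[of 3] normal_extension_def normal_extension_adj_def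
          sum_lessThan_3 cinner_cscale_left cinner_cscale_right)
    show "normal_extension_adj d (normal_extension d f) = normal_extension d (normal_extension_adj d f)"
      for f
      by (rule ext) (simp add: normal_extension_def normal_extension_adj_def cscale_cscale
          unitary_extension_left_inverse unitary_extension_right_inverse mult.commute)
  qed
qed

lemma subnormal_if_intertwines:
  fixes S W K :: "'a \<Rightarrow> 'a"
  assumes "clinear W" "clinear K"
    and isometric_sum: "\<And>x y. cinner (W x) (W y) + cinner (K x) (K y) = cinner x y"
    and W_S: "\<And>x. W (S x) = V (W x)" and K_S: "\<And>x. K (S x) = cscale d (K x)"
  shows "subnormal S"
  unfolding subnormal_def
proof (intro exI conjI allI)
  define J where "J x = (\<lambda>n::nat. if n = 0 then W x else if n = 2 then K x else 0)" for x
  show "normal_l2 (normal_extension d)" by (rule normal_l2_normal_extension)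
  show "J x \<in> l2" for x
    by (rule l2_if_finite_support[of 3]) (simp add: J_def)
  show "J (x + y) = (\<lambda>n. J x n + J y n)" for x y
    by (rule ext) (simp add: J_def clinear_add[OF \<open>clinear W\<close>] clinear_add[OF \<open>clinear K\<close>])
  show "J (cscale c x) = (\<lambda>n. cscale c (J x n))" for c x
    by (rule ext) (simp add: J_def clinear_cscale[OF \<open>clinear W\<close>] clinear_cscale[OF \<open>clinear K\<close>])
  show "l2inner (J x) (J y) = cinner x y" for x y
    by (simp add: l2inner_finite_support[of 3] J_def sum_lessThan_3 isometric_sum)
  show "normal_extension d (J x) = J (S x)" for x
    by (rule ext) (simp add: normal_extension_def J_def W_S K_S defect_V clinear_zero[OF clinear_defect] clinear_zero[OF clinear_Vs])
qed

end

lemma isometry_with_adjoint_similarity: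
  fixes S Sadj W Winv :: "'a::complex_inner \<Rightarrow> 'a"
  assumes "clinear S" "clinear Sadj" and S_adj: "\<And>x y. cinner (S x) y = cinner x (Sadj y)"
    and "clinear W" "clinear Winv" and W_Winv: "\<And>x. W (Winv x) = x" and Winv_W: "\<And>x. Winv (W x) = x"
    and W_sa: "\<And>x y. cinner (W x) y = cinner x (W y)"
    and invariant: "\<And>x. Sadj (W (W (S x))) = W (W x)"
  shows "isometry_with_adjoint (\<lambda>x. W (S (Winv x))) (\<lambda>y. Winv (Sadj (W y)))"
proof
  have Winv_sa: "cinner (Winv x) y = cinner x (Winv y)" for x y
    using W_sa[of "Winv x" "Winv y"] by (simp add: W_Winv)
  show "cinner (W (S (Winv x))) y = cinner x (Winv (Sadj (W y)))" for x y
    by (simp add: W_sa S_adj Winv_sa)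
  show "Winv (Sadj (W (W (S (Winv x))))) = x" for x
    by (simp add: invariant W_Winv Winv_W)
  show "clinear (\<lambda>x. W (S (Winv x)))"
    using clinear_compose[OF \<open>clinear W\<close> clinear_compose[OF \<open>clinear S\<close> \<open>clinear Winv\<close>]] .
  show "clinear (\<lambda>y. Winv (Sadj (W y)))"
    using clinear_compose[OF \<open>clinear Winv\<close> clinear_compose[OF \<open>clinear Sadj\<close> \<open>clinear W\<close>]] .
qed

lemma alternating_binomial_sum_geometric_nonpos:
  fixes r :: real
  assumes "0 \<le> r" "r \<le> 1" "n \<ge> 1"
  shows "(\<Sum>j = 0..n. ((-1) ^ j * real (n choose j)) * (\<Sum>k<j. r ^ k)) \<le> 0"
proof (cases "r = 1")
  case True
  then have "(\<Sum>j = 0..n. ((-1) ^ j * real (n choose j)) * (\<Sum>k<j. r ^ k))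
      = (\<Sum>j\<le>n. (-1) ^ j * real j * real (n choose j))"
    by (simp add: atLeast0AtMost algebra_simps)
  also have "\<dots> \<le> 0"
    using choose_alternating_linear_sum[of n, where 'a = real] \<open>n \<ge> 1\<close>
    by (cases "n = 1") simp_all
  finally show ?thesis .
next
  case False
  then have "r < 1" using \<open>r \<le> 1\<close> by simp
  define c where "c j = (-1) ^ j * real (n choose j)" for j
  have "(\<Sum>j = 0..n. c j * (\<Sum>k<j. r ^ k)) = (\<Sum>j = 0..n. c j * ((1 - r ^ j) / (1 - r)))"
    using False by (simp add: sum_gp_strict)
  also have "\<dots> = (\<Sum>j = 0..n. c j * (1 - r ^ j)) / (1 - r)"
    by (simp add: sum_divide_distrib)
  also have "(\<Sum>j = 0..n. c j * (1 - r ^ j))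
      = (\<Sum>j = 0..n. c j) - (\<Sum>j = 0..n. real (n choose j) * (- r) ^ j)"
  proof -
    have "c j * (1 - r ^ j) = c j - real (n choose j) * (- r) ^ j" for j
      using power_minus[of r j]
      by (simp only: c_def right_diff_distrib mult_1_right mult.assoc mult.commute mult.left_commute)
    then show ?thesis by (simp only: sum_subtractf)
  qed
  also have "(\<Sum>j = 0..n. c j) = 0"
    using choose_alternating_sum[of n, where 'a = real] \<open>n \<ge> 1\<close> by (simp add: c_def atLeast0AtMost)
  also have "(\<Sum>j = 0..n. real (n choose j) * (- r) ^ j) = (1 - r) ^ n"
    using binomial_ring[of "- r" 1 n] by (simp add: atLeast0AtMost)
  also have "(0 - (1 - r) ^ n) / (1 - r) \<le> 0" using \<open>r < 1\<close> by simp
  finally show ?thesis by (simp add: c_def)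
qed

section \<open>Concave operators with rank-one defect\<close>

locale concave_rank_one_defect =
  fixes T :: "'a::chilbert \<Rightarrow> 'a" and e :: 'a
  assumes bounded: "bounded_clinear T" and concave: "concave_op T" and e_nonzero: "e \<noteq> 0"
    and Delta_eq: "\<And>x. Delta T x = cscale (cinner e x) e"
begin

abbreviation E :: real where "E \<equiv> (norm e)\<^sup>2"

lemma E_pos: "E > 0"
  using e_nonzero by simp

lemma one_plus_E_pos: "1 + E > 0"
  using zero_le_power2[of "norm e"] by linarith

lemma clinear_T: "clinear T"
  using bounded by (rule bounded_clinear_imp_clinear)

lemma cadj_T_T: "cadj T (T x) = id_plus_outer e 1 x"
  using Delta_eq[of x] by (simp add: Delta_def id_plus_outer_def diff_eq_eq add.commute)

lemma power2_norm_T: "(norm (T x))\<^sup>2 = (norm x)\<^sup>2 + (cmod (cinner e x))\<^sup>2"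
proof -
  have "complex_of_real ((norm (T x))\<^sup>2 - (norm x)\<^sup>2) = complex_of_real ((cmod (cinner e x))\<^sup>2)"
    using cinner_Delta[OF bounded, of x] complex_norm_square[of "cinner e x"]
    by (simp add: Delta_eq cinner_cscale_right cinner_commute[of x e] mult.commute)
  then have "(norm (T x))\<^sup>2 - (norm x)\<^sup>2 = (cmod (cinner e x))\<^sup>2"
    by (simp only: of_real_eq_iff)
  then show ?thesis by simp
qed

lemma cmod_cinner_e_T_le: "cmod (cinner e (T x)) \<le> cmod (cinner e x)"
proof -
  have "(cmod (cinner e (T x)))\<^sup>2 \<le> (cmod (cinner e x))\<^sup>2"
    using concave_op_norm_ineq[OF bounded concave, of x] power2_norm_T[of x] power2_norm_T[of "T x"]
    by linarith
  then show ?thesis by (rule power2_le_imp_le) simp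
qed

definition \<alpha> :: complex where
  "\<alpha> = cinner e (cadj T e) / complex_of_real E"

lemma cadj_T_e: "cadj T e = cscale \<alpha> e"
proof -
  define w where "w = cadj T e - cscale \<alpha> e"
  have "\<alpha> * complex_of_real E = cinner e (cadj T e)"
    using E_pos by (simp add: \<alpha>_def)
  then have ew: "cinner e w = 0"
    by (simp add: w_def cinner_diff_right cinner_cscale_right cinner_self)
  then have "cinner e (T w) = 0"
    using cmod_cinner_e_T_le[of w] by simp
  then have "cinner w (cadj T e) = 0"
    using cinner_cadj[OF bounded, of w e] cinner_commute[of e "T w"] by simp
  moreover have "cinner w (cscale \<alpha> e) = 0"
    using ew cinner_commute[of w e] by (simp add: cinner_cscale_right)
  moreover have "cinner w w = cinner w (cadj T e) - cinner w (cscale \<alpha> e)"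
    by (simp add: w_def cinner_diff_right)
  ultimately have "cinner w w = 0" by simp
  then show ?thesis by (simp add: cinner_eq_zero_iff w_def)
qed

lemma cinner_e_T: "cinner e (T x) = cnj \<alpha> * cinner e x"
  by (simp add: cinner_cadj_left[OF bounded, symmetric] cadj_T_e cinner_cscale_left)

lemma cmod_\<alpha>_le: "cmod \<alpha> \<le> 1"
  using cmod_cinner_e_T_le[of e] E_pos by (simp add: cinner_e_T cinner_self norm_mult)

lemma Delta_regular_T: "Delta_regular T"
proof -
  have "Delta T = (\<lambda>x. cscale (cinner e x) e)" using Delta_eq by blast
  then show ?thesis
    using e_nonzero
    by (simp add: Delta_regular_def osqrt_outer clinear_cscale[OF clinear_T] cinner_cscale_right
        cinner_e_T cinner_self cscale_cscale power2_eq_square field_simps flip: of_real_mult)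
qed

lemma power2_norm_funpow_T:
  "(norm ((T ^^ j) x))\<^sup>2 = (norm x)\<^sup>2 + (cmod (cinner e x))\<^sup>2 * (\<Sum>k<j. ((cmod \<alpha>)\<^sup>2) ^ k)"
proof (induction j)
  case (Suc j)
  have "cmod (cinner e ((T ^^ j) x)) = cmod \<alpha> ^ j * cmod (cinner e x)"
    by (induction j) (simp_all add: cinner_e_T norm_mult)
  then show ?case
    using Suc.IH
    by (simp add: power2_norm_T power_mult_distrib algebra_simps flip: power_mult)
qed simp

lemma completely_hyperexpansive_T: "completely_hyperexpansive T"
  unfolding completely_hyperexpansive_def oneg_def opos_def
proof (intro allI impI)
  fix n :: nat and x assume "n \<ge> 1"
  define c where "c j = (-1) ^ j * real (n choose j)" for j
  have "cinner x (- (\<Sum>j = 0..n. c j *\<^sub>R (cadj T ^^ j) ((T ^^ j) x)))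
      = complex_of_real (- (\<Sum>j = 0..n. c j * (norm ((T ^^ j) x))\<^sup>2))"
    by (simp add: cinner_minus_right cinner_sum_right cinner_scaleR_right
        cinner_funpow_cadj[OF bounded] cinner_self)
  moreover have "(\<Sum>j = 0..n. c j * (norm ((T ^^ j) x))\<^sup>2)
      = (norm x)\<^sup>2 * (\<Sum>j = 0..n. c j)
        + (cmod (cinner e x))\<^sup>2 * (\<Sum>j = 0..n. c j * (\<Sum>k<j. ((cmod \<alpha>)\<^sup>2) ^ k))"
    by (simp add: power2_norm_funpow_T distrib_left sum.distrib sum_distrib_left sum_distrib_right
        mult_ac)
  moreover have "(\<Sum>j = 0..n. c j) = 0"
    using choose_alternating_sum[of n, where 'a = real] \<open>n \<ge> 1\<close> by (simp add: c_def atLeast0AtMost)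
  moreover have "(\<Sum>j = 0..n. c j * (\<Sum>k<j. ((cmod \<alpha>)\<^sup>2) ^ k)) \<le> 0"
    unfolding c_def using cmod_\<alpha>_le \<open>n \<ge> 1\<close>
    by (intro alternating_binomial_sum_geometric_nonpos) (simp_all add: power_le_one)
  ultimately show "Im (cinner x (- (\<Sum>j = 0..n. ((- 1) ^ j * real (n choose j)) *\<^sub>R (cadj T ^^ j) ((T ^^ j) x)))) = 0 \<and>
      0 \<le> Re (cinner x (- (\<Sum>j = 0..n. ((- 1) ^ j * real (n choose j)) *\<^sub>R (cadj T ^^ j) ((T ^^ j) x))))"
    unfolding c_def[symmetric] by (simp add: mult_nonneg_nonpos)
qed

definition \<gamma> :: real where
  "\<gamma> = 1 / (1 + E)"

lemma \<gamma>_pos: "0 < \<gamma>" and \<gamma>_less_1: "\<gamma> < 1"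
  using E_pos one_plus_E_pos by (simp_all add: \<gamma>_def)

lemma cadj_T_T_inverse:
  "cadj T (T (id_plus_outer e (- \<gamma>) x)) = x" "id_plus_outer e (- \<gamma>) (cadj T (T x)) = x"
proof -
  have "1 + - \<gamma> + 1 * - \<gamma> * E = 0"
    using one_plus_E_pos by (simp add: \<gamma>_def field_simps)
  then show "cadj T (T (id_plus_outer e (- \<gamma>) x)) = x" "id_plus_outer e (- \<gamma>) (cadj T (T x)) = x"
    by (simp_all add: cadj_T_T id_plus_outer_inverse)
qed

lemma inv_cadj_T_T: "inv (\<lambda>x. cadj T (T x)) = id_plus_outer e (- \<gamma>)"
  using cadj_T_T_inverse
  by (intro ext inv_f_eq inj_on_inverseI[where g = "id_plus_outer e (- \<gamma>)"]) auto

lemma cauchy_dual_eq: "cauchy_dual T x = T (id_plus_outer e (- \<gamma>) x)"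
  by (simp add: cauchy_dual_def inv_cadj_T_T)

definition cauchy_dual_adj :: "'a \<Rightarrow> 'a" where
  "cauchy_dual_adj y = id_plus_outer e (- \<gamma>) (cadj T y)"

lemma cinner_cauchy_dual: "cinner (cauchy_dual T x) y = cinner x (cauchy_dual_adj y)"
  by (simp add: cauchy_dual_eq cauchy_dual_adj_def cinner_cadj[OF bounded] id_plus_outer_self_adjoint)

lemma cauchy_dual_adj_cauchy_dual: "cauchy_dual_adj (cauchy_dual T x) = id_plus_outer e (- \<gamma>) x"
  by (simp add: cauchy_dual_eq cauchy_dual_adj_def cadj_T_T_inverse)

lemma contraction_cauchy_dual: "contraction (cauchy_dual T)"
  unfolding contraction_def
proof
  fix x
  have "complex_of_real ((norm (cauchy_dual T x))\<^sup>2) = cinner (cauchy_dual T x) (cauchy_dual T x)"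
    by (rule cinner_self[symmetric])
  also have "\<dots> = cinner x (id_plus_outer e (- \<gamma>) x)"
    by (simp add: cinner_cauchy_dual cauchy_dual_adj_cauchy_dual)
  also have "\<dots> = complex_of_real ((norm x)\<^sup>2 - \<gamma> * (cmod (cinner e x))\<^sup>2)"
    using complex_norm_square[of "cinner e x"]
    by (simp add: id_plus_outer_def cinner_add_right cinner_cscale_right cinner_self
        cinner_commute[of x e] algebra_simps)
  finally have "(norm (cauchy_dual T x))\<^sup>2 \<le> (norm x)\<^sup>2"
    using \<gamma>_pos by (simp only: of_real_eq_iff) simp
  then show "norm (cauchy_dual T x) \<le> norm x" by (rule power2_le_imp_le) simp
qed

definition \<beta> :: complex where
  "\<beta> = \<alpha> * complex_of_real \<gamma>"

lemma cauchy_dual_adj_e: "cauchy_dual_adj e = cscale \<beta> e"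
proof -
  have "id_plus_outer e (- \<gamma>) e = cscale (complex_of_real (1 - \<gamma> * E)) e"
    using cscale_add_left[of 1 "complex_of_real (- \<gamma> * E)" e]
    by (simp add: id_plus_outer_def cinner_self)
  also have "1 - \<gamma> * E = \<gamma>"
    using one_plus_E_pos by (simp add: \<gamma>_def field_simps)
  finally have "id_plus_outer e (- \<gamma>) e = cscale (complex_of_real \<gamma>) e" .
  then show ?thesis
    by (simp add: cauchy_dual_adj_def cadj_T_e clinear_cscale[OF clinear_id_plus_outer]
        cscale_cscale \<beta>_def mult.commute)
qed

lemma cinner_e_cauchy_dual: "cinner e (cauchy_dual T x) = cnj \<beta> * cinner e x"
proof -
  have "cnj (cinner e (cauchy_dual T x)) = cnj (cnj \<beta> * cinner e x)"
    using cinner_cauchy_dual[of x e] cinner_commute[of "cauchy_dual T x" e] cinner_commute[of x e]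
    by (simp add: cauchy_dual_adj_e cinner_cscale_right)
  then show ?thesis by (simp only: complex_cnj_cancel_iff)
qed

lemma power2_cmod_\<beta>_less: "(cmod \<beta>)\<^sup>2 < \<gamma>"
proof -
  have "cmod \<beta> \<le> \<gamma>"
    using cmod_\<alpha>_le \<gamma>_pos by (simp add: \<beta>_def norm_mult mult_left_le_one_le)
  then have "(cmod \<beta>)\<^sup>2 \<le> \<gamma>\<^sup>2" by (simp add: power_mono)
  also have "\<gamma>\<^sup>2 < \<gamma>" using \<gamma>_pos \<gamma>_less_1 by (simp add: power2_eq_square)
  finally show ?thesis .
qed

lemma clinear_cauchy_dual: "clinear (cauchy_dual T)"
  using clinear_compose[OF clinear_T clinear_id_plus_outer] by (simp add: cauchy_dual_eq[abs_def])

lemma clinear_cauchy_dual_adj: "clinear cauchy_dual_adj"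
  using clinear_compose[OF clinear_id_plus_outer clinear_cadj[OF bounded]]
  by (simp add: cauchy_dual_adj_def[abs_def])

definition \<rho> :: real where
  "\<rho> = \<gamma> * E / (1 - (cmod \<beta>)\<^sup>2)"

lemma \<rho>_nonneg: "0 \<le> \<rho>" and \<rho>_less_1: "\<rho> < 1"
proof -
  have "1 - \<gamma> * E = \<gamma>" using one_plus_E_pos by (simp add: \<gamma>_def field_simps)
  then have "\<gamma> * E < 1 - (cmod \<beta>)\<^sup>2" using power2_cmod_\<beta>_less by linarith
  moreover have "0 < \<gamma> * E" using \<gamma>_pos E_pos by simp
  ultimately show "0 \<le> \<rho>" "\<rho> < 1" by (simp_all add: \<rho>_def)
qed

text \<open>\<open>\<rho>\<close> is chosen to solve \<open>\<gamma> \<parallel>e\<parallel>\<^sup>2 + \<rho> \<bar>\<beta>\<bar>\<^sup>2 = \<rho>\<close>.\<close>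

lemma cauchy_dual_invariant_form:
  "cauchy_dual_adj (id_plus_outer e (- (\<rho> / E)) (cauchy_dual T x)) = id_plus_outer e (- (\<rho> / E)) x"
proof -
  have "cauchy_dual_adj (id_plus_outer e (- (\<rho> / E)) (cauchy_dual T x))
      = id_plus_outer e (- \<gamma>) x + cscale (complex_of_real (- (\<rho> / E) * (cmod \<beta>)\<^sup>2) * cinner e x) e"
    by (simp add: id_plus_outer_def clinear_add[OF clinear_cauchy_dual_adj]
        clinear_cscale[OF clinear_cauchy_dual_adj] cauchy_dual_adj_cauchy_dual cinner_e_cauchy_dual
        cauchy_dual_adj_e cscale_cscale complex_norm_square mult_ac del: of_real_power)
  also have "\<dots> = id_plus_outer e (- \<gamma> + - (\<rho> / E) * (cmod \<beta>)\<^sup>2) x"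
    by (rule id_plus_outer_add_outer)
  also have "- \<gamma> + - (\<rho> / E) * (cmod \<beta>)\<^sup>2 = - (\<rho> / E)"
    using E_pos power2_cmod_\<beta>_less \<gamma>_less_1 by (simp add: \<rho>_def field_simps)
  finally show ?thesis .
qed

definition \<kappa> :: real where
  "\<kappa> = (1 - sqrt (1 - \<rho>)) / E"

definition form_root :: "'a \<Rightarrow> 'a" where
  "form_root = id_plus_outer e (- \<kappa>)"

definition form_root_inv :: "'a \<Rightarrow> 'a" where
  "form_root_inv = id_plus_outer e (\<kappa> / sqrt (1 - \<rho>))"

definition \<tau> :: real where
  "\<tau> = sqrt \<rho> / E"

definition form_compl :: "'a \<Rightarrow> 'a" where
  "form_compl x = cscale (complex_of_real \<tau> * cinner e x) e"

lemma form_root_inverse: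
  "form_root (form_root_inv x) = x" "form_root_inv (form_root x) = x"
proof -
  define \<sigma> where "\<sigma> = sqrt (1 - \<rho>)"
  have "\<kappa> * E = 1 - \<sigma>" "\<sigma> > 0"
    using E_pos \<rho>_less_1 by (simp_all add: \<kappa>_def \<sigma>_def)
  have "- \<kappa> + \<kappa> / \<sigma> + - \<kappa> * (\<kappa> / \<sigma>) * E = \<kappa> / \<sigma> * (1 - \<kappa> * E) - \<kappa>"
    by (simp add: algebra_simps)
  also have "\<dots> = 0"
    using \<open>\<kappa> * E = 1 - \<sigma>\<close> \<open>\<sigma> > 0\<close> by simp
  finally have "- \<kappa> + \<kappa> / \<sigma> + - \<kappa> * (\<kappa> / \<sigma>) * E = 0" .
  then show "form_root (form_root_inv x) = x" "form_root_inv (form_root x) = x"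
    by (simp_all add: form_root_def form_root_inv_def id_plus_outer_inverse flip: \<sigma>_def)
qed

lemma form_root_square: "form_root (form_root x) = id_plus_outer e (- (\<rho> / E)) x"
  using id_plus_outer_square[OF e_nonzero \<rho>_less_1] by (simp add: form_root_def \<kappa>_def)

lemma form_root_self_adjoint: "cinner (form_root x) y = cinner x (form_root y)"
  by (simp add: form_root_def id_plus_outer_self_adjoint)

lemma cinner_form_root_plus_form_compl:
  "cinner (form_root x) (form_root y) + cinner (form_compl x) (form_compl y) = cinner x y"
proof -
  have "cinner (form_root x) (form_root y) = cinner x (id_plus_outer e (- (\<rho> / E)) y)"
    by (simp add: form_root_self_adjoint form_root_square)
  also have "\<dots> = cinner x y - complex_of_real (\<rho> / E) * (cinner e y * cinner x e)"
    by (simp add: id_plus_outer_def cinner_add_right cinner_cscale_right mult_ac del: of_real_divide)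
  finally have "cinner (form_root x) (form_root y)
      = cinner x y - complex_of_real (\<rho> / E) * (cinner e y * cinner x e)" .
  moreover have "cinner (form_compl x) (form_compl y)
      = complex_of_real (\<tau> * \<tau> * E) * (cinner e y * cinner x e)"
    by (simp add: form_compl_def cinner_cscale_left cinner_cscale_right cinner_self
        cinner_commute[of x e] mult_ac)
  moreover have "\<tau> * \<tau> * E = \<rho> / E"
    using \<rho>_nonneg E_pos by (simp add: \<tau>_def power2_eq_square)
  ultimately show ?thesis by simp
qed

lemma isometry_with_adjoint_conj_cauchy_dual:
  "isometry_with_adjoint (\<lambda>x. form_root (cauchy_dual T (form_root_inv x)))
     (\<lambda>y. form_root_inv (cauchy_dual_adj (form_root y)))"
proof (rule isometry_with_adjoint_similarity[of "cauchy_dual T" cauchy_dual_adj form_root form_root_inv])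
  show "clinear form_root" "clinear form_root_inv"
    by (simp_all add: form_root_def form_root_inv_def clinear_id_plus_outer)
qed (simp_all add: clinear_cauchy_dual clinear_cauchy_dual_adj cinner_cauchy_dual form_root_inverse
    form_root_self_adjoint form_root_square cauchy_dual_invariant_form)

lemma subnormal_cauchy_dual: "subnormal (cauchy_dual T)"
proof (rule isometry_with_adjoint.subnormal_if_intertwines[OF isometry_with_adjoint_conj_cauchy_dual])
  show "clinear form_root" by (simp add: form_root_def clinear_id_plus_outer)
  show "clinear form_compl"
    by (simp add: clinear_def form_compl_def cinner_add_right cinner_cscale_right ring_distribs
        cscale_add_left cscale_cscale mult_ac)
  show "form_root (cauchy_dual T x) = form_root (cauchy_dual T (form_root_inv (form_root x)))" for x
    by (simp add: form_root_inverse)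
  show "form_compl (cauchy_dual T x) = cscale (cnj \<beta>) (form_compl x)" for x
    by (simp add: form_compl_def cinner_e_cauchy_dual cscale_cscale mult_ac)
qed (rule cinner_form_root_plus_form_compl)

end

theorem corollary3p6:
  fixes T :: "'a::chilbert \<Rightarrow> 'a"
  assumes "bounded_clinear T"
    and "concave_op T"
    and "rank_one (Delta T)"
  shows "Delta_regular T \<and> completely_hyperexpansive T \<and>
         subnormal (cauchy_dual T) \<and> contraction (cauchy_dual T)"
proof -
  obtain e where "e \<noteq> 0" and "\<And>x. Delta T x = cscale (cinner e x) e"
    using Delta_eq_outer_if_rank_one[OF assms] by blast
  then interpret concave_rank_one_defect T e
    using assms by unfold_locales
  show ?thesis
    using Delta_regular_T completely_hyperexpansive_T subnormal_cauchy_dual contraction_cauchy_dual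
    by blast
qed

end
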